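(* Let $\mathbf{B}_{t|t-1}$, $\mathbf{B}_{t|t}$, $\bm{\Lambda}_t$, $\mathbf{L}_t$ be defined as in the multi-resolution filter. Assume that $\mathbf{R}_t$ and $\mathbf{H}_t$ are block-diagonal with blocks corresponding to the finest subregions, i.e.: for $i \in \mathcal{I}_{i_1,\ldots,i_M}$ and $j \in \mathcal{I}_{j_1,\ldots,j_M}$, $\mathbf{R}_t[i,j]=0$ unless $(i_1,\ldots,i_M)=(j_1,\ldots,j_M)$; if $\mathbf{H}_t[i,j]\neq 0$ then $\mathbf{H}_t[i,k]=0$ for all $k\notin \mathcal{I}_{j_1,\ldots,j_M}$; and if $i_1,i_2\in\mathcal{I}_{j_1,\ldots,j_M}$ with $i_1<i_2$, then every $i_3$ with $i_1<i_3<i_2$ also lies in $\mathcal{I}_{j_1,\ldots,j_M}$. Then: 1. $\bm{\Lambda}_t \in \mathcal{S}(\mathbf{B}_{t|t-1}'\mathbf{B}_{t|t-1})$; 2. $\mathbf{L}_t \in \mathcal{S}(\bm{\Lambda}_t^L)$ and $\mathbf{L}_t^{-1} \in \mathcal{S}(\bm{\Lambda}_t^L)$; 3. $\mathbf{B}_{t|t} \in \mathcal{S}(\mathbf{B}_{t|t-1})$.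
   Context: Linear Gaussian state-space model $\mathbf{y}_t=\mathbf{H}_t\mathbf{x}_t+\mathbf{v}_t$, $\mathbf{v}_t\sim\mathcal{N}(\mathbf{0},\mathbf{R}_t)$, $\mathbf{x}_t=\mathbf{A}_t\mathbf{x}_{t-1}+\mathbf{w}_t$, $\mathbf{w}_t\sim\mathcal{N}(\mathbf{0},\mathbf{Q}_t)$, with state on a grid of $n_\mathcal{G}$ points in a domain $\mathcal{D}$. The domain is recursively partitioned into $J$ subregions per level up to resolution $M$, giving regions $\mathcal{D}_{j_1,\ldots,j_m}$ with grid index sets $\mathcal{I}_{j_1,\ldots,j_m}$; knot sets $\mathcal{K}_{j_1,\ldots,j_m}\subset\mathcal{I}_{j_1,\ldots,j_m}$ of size $r_m$ partition $\{1,\ldots,n_\mathcal{G}\}$; grid elements are ordered lexicographically by finest region. The multi-resolution decomposition (MRD) of a covariance matrix $\bm{\Sigma}$ returns $\mathbf{B}=(\mathbf{B}^M,\ldots,\mathbf{B}^0)$ with $\mathbf{B}^m$ block-diagonal with blocks of size $|\mathcal{I}_{j_1,\ldots,j_m}|\times r_m$. In the multi-resolution filter, $\mathbf{B}_{t|t-1}=\mathrm{MRD}(\mathbf{A}_t\mathbf{B}_{t-1|t-1}\mathbf{B}_{t-1|t-1}'\mathbf{A}_t'+\mathbf{Q}_t)$, $\bm{\Lambda}_t=\mathbf{I}_{n_\mathcal{G}}+\mathbf{B}_{t|t-1}'\mathbf{H}_t'\mathbf{R}_t^{-1}\mathbf{H}_t\mathbf{B}_{t|t-1}$, $\mathbf{L}_t$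 is the lower Cholesky triangle of $\bm{\Lambda}_t$, and $\mathbf{B}_{t|t}=\mathbf{B}_{t|t-1}(\mathbf{L}_t^{-1})'$. $\mathcal{S}(\mathbf{G})$ denotes the set of matrices whose structural zeros include those of $\mathbf{G}$; $\mathbf{G}^L$ is the lower triangle of $\mathbf{G}$. *)

theory Defs
  imports "Jordan_Normal_Form.Matrix"
begin

text \<open>Grid points and knots are indexed by 0..<n (the paper uses 1..n).
  A region D_{j_1,...,j_m} is represented by the list [j_1,...,j_m] with
  each j_k < J (the paper uses 1..J); the root region D is the empty list.\<close>

definition regions :: "nat \<Rightarrow> nat \<Rightarrow> nat list set" where
  "regions J M = {p. length p \<le> M \<and> set p \<subseteq> {..<J}}"

definition mr_partition ::
  "nat \<Rightarrow> nat \<Rightarrow> nat \<Rightarrow> (nat list \<Rightarrow> nat set) \<Rightarrow> bool" where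
  "mr_partition n J M Ireg \<longleftrightarrow>
     Ireg [] = {..<n} \<and>
     (\<forall>p \<in> regions J M. length p < M \<longrightarrow>
        Ireg p = (\<Union>j<J. Ireg (p @ [j])) \<and>
        (\<forall>j<J. \<forall>j'<J. j \<noteq> j' \<longrightarrow> Ireg (p @ [j]) \<inter> Ireg (p @ [j']) = {})) \<and>
     (\<forall>p \<in> regions J M. \<forall>q \<in> regions J M.
        length p = M \<and> length q = M \<and> (p, q) \<in> lex less_than \<longrightarrow>
        (\<forall>i \<in> Ireg p. \<forall>k \<in> Ireg q. i < k))"

definition mr_knots ::
  "nat \<Rightarrow> nat \<Rightarrow> nat \<Rightarrow> (nat list \<Rightarrow> nat set) \<Rightarrow> (nat list \<Rightarrow> nat set)
   \<Rightarrow> (nat \<Rightarrow> nat) \<Rightarrow> bool" where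
  "mr_knots n J M Ireg K r \<longleftrightarrow>
     (\<forall>p \<in> regions J M. K p \<subseteq> Ireg p \<and> card (K p) = r (length p)) \<and>
     (\<forall>p \<in> regions J M. \<forall>q \<in> regions J M. p \<noteq> q \<longrightarrow> K p \<inter> K q = {}) \<and>
     (\<Union>p \<in> regions J M. K p) = {..<n}"

text \<open>Column layout of B = (B^M, ..., B^0): column c of B belongs to the
  block of region colreg c.\<close>

definition col_order :: "nat list \<Rightarrow> nat list \<Rightarrow> bool" where
  "col_order p q \<longleftrightarrow> length q < length p \<or>
     (length p = length q \<and> (p = q \<or> (p, q) \<in> lex less_than))"

definition mr_columns ::
  "nat \<Rightarrow> nat \<Rightarrow> nat \<Rightarrow> (nat list \<Rightarrow> nat set) \<Rightarrow> (nat \<Rightarrow> nat list) \<Rightarrow> bool" where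
  "mr_columns n J M K colreg \<longleftrightarrow>
     (\<forall>c<n. colreg c \<in> regions J M) \<and>
     (\<forall>p \<in> regions J M. card {c. c < n \<and> colreg c = p} = card (K p)) \<and>
     (\<forall>c d. c < d \<and> d < n \<longrightarrow> col_order (colreg c) (colreg d))"

text \<open>A structure (pattern) is a predicate telling which entries may be
  nonzero; its complement is the set of structural zeros.\<close>

type_synonym pattern = "nat \<Rightarrow> nat \<Rightarrow> bool"

definition in_S :: "real mat \<Rightarrow> pattern \<Rightarrow> bool" where
  "in_S A P \<longleftrightarrow> (\<forall>i < dim_row A. \<forall>j < dim_col A. \<not> P i j \<longrightarrow> A $$ (i, j) = 0)"

definition pat_mult :: "nat \<Rightarrow> pattern \<Rightarrow> pattern \<Rightarrow> pattern" where
  "pat_mult k P Q = (\<lambda>i l. \<exists>j<k. P i j \<and> Q j l)"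

definition pat_trans :: "pattern \<Rightarrow> pattern" where
  "pat_trans P = (\<lambda>i j. P j i)"

definition pat_lower :: "pattern \<Rightarrow> pattern" where
  "pat_lower P = (\<lambda>i j. j \<le> i \<and> P i j)"

definition mrd_pattern :: "(nat list \<Rightarrow> nat set) \<Rightarrow> (nat \<Rightarrow> nat list) \<Rightarrow> pattern" where
  "mrd_pattern Ireg colreg = (\<lambda>i c. i \<in> Ireg (colreg c))"

definition mat_inv :: "real mat \<Rightarrow> real mat" where
  "mat_inv A = (THE B. B \<in> carrier_mat (dim_row A) (dim_row A) \<and>
                       A * B = 1\<^sub>m (dim_row A) \<and> B * A = 1\<^sub>m (dim_row A))"

definition pos_def :: "real mat \<Rightarrow> bool" where
  "pos_def A \<longleftrightarrow> A \<in> carrier_mat (dim_row A) (dim_row A) \<and> A\<^sup>T = A \<and>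
     (\<forall>x \<in> carrier_vec (dim_row A). x \<noteq> 0\<^sub>v (dim_row A) \<longrightarrow> x \<bullet> (A *\<^sub>v x) > 0)"

definition lower_cholesky :: "real mat \<Rightarrow> real mat \<Rightarrow> bool" where
  "lower_cholesky L A \<longleftrightarrow> L \<in> carrier_mat (dim_row A) (dim_row A) \<and>
     (\<forall>i < dim_row A. \<forall>j < dim_row A. i < j \<longrightarrow> L $$ (i, j) = 0) \<and>
     (\<forall>i < dim_row A. L $$ (i, i) > 0) \<and>
     L * L\<^sup>T = A"

end

theory Submission
  imports Defs "HOL-Library.Sublist" "Jordan_Normal_Form.Determinant"
begin

text \<open>Column c of B is supported on the grid cells of its region colreg c, and two regions
  have intersecting cells iff one is an ancestor (a prefix) of the other; this is the
  pattern of B'B.  Since H and R^{-1} only couple grid points inside one finest region,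
  B'H'R^{-1}HB only couples columns whose regions contain a common finest region, and such
  regions are nested.  Columns run from fine to coarse resolution, so on the lower triangle
  the pattern says that colreg c is an ancestor of colreg d.  This relation is transitive and
  two ancestors of a common region are nested, so Cholesky elimination creates no fill-in and
  forward substitution keeps L^{-1} inside the pattern.  Finally, B L^{-T} mixes column c only
  with columns of descendant regions, whose supports lie inside that of c.\<close>

lemma in_S_mono:
  "in_S A P \<Longrightarrow> (\<And>i j. i < dim_row A \<Longrightarrow> j < dim_col A \<Longrightarrow> P i j \<Longrightarrow> P' i j) \<Longrightarrow> in_S A P'"
  unfolding in_S_def by blast

lemma in_S_transpose: "in_S A P \<Longrightarrow> in_S A\<^sup>T (pat_trans P)"
  unfolding in_S_def pat_trans_def by auto

lemma in_S_add:
  "A \<in> carrier_mat a b \<Longrightarrow> B \<in> carrier_mat a b \<Longrightarrow> in_S A P \<Longrightarrow> in_S B P \<Longrightarrow> in_S (A + B) P"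
  unfolding in_S_def by auto

lemma in_S_one_mat: "(\<And>i. i < n \<Longrightarrow> P i i) \<Longrightarrow> in_S (1\<^sub>m n) P"
  unfolding in_S_def by auto

lemma index_mult_mat_sum:
  assumes "A \<in> carrier_mat a m" "B \<in> carrier_mat m b" "i < a" "j < b"
  shows "(A * B) $$ (i, j) = (\<Sum>e<m. A $$ (i, e) * B $$ (e, j))"
  using assms by (auto simp: scalar_prod_def lessThan_atLeast0 intro!: sum.cong)

lemma index_mult_mat_single_term:
  assumes "A \<in> carrier_mat a m" "B \<in> carrier_mat m b" "i < a" "j < b" "k < m"
    and others: "\<And>e. e < m \<Longrightarrow> e \<noteq> k \<Longrightarrow> A $$ (i, e) * B $$ (e, j) = 0"
  shows "(A * B) $$ (i, j) = A $$ (i, k) * B $$ (k, j)"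
proof -
  have "(A * B) $$ (i, j) = (\<Sum>e<m. A $$ (i, e) * B $$ (e, j))"
    using assms(1-4) by (rule index_mult_mat_sum)
  also have "\<dots> = A $$ (i, k) * B $$ (k, j) + (\<Sum>e\<in>{..<m} - {k}. A $$ (i, e) * B $$ (e, j))"
    using \<open>k < m\<close> by (subst sum.remove[of _ k]) auto
  also have "(\<Sum>e\<in>{..<m} - {k}. A $$ (i, e) * B $$ (e, j)) = 0"
    using others by (intro sum.neutral) auto
  finally show ?thesis by simp
qed

lemma in_S_mult:
  assumes A: "A \<in> carrier_mat a k" and B: "B \<in> carrier_mat k b"
    and "in_S A P" and "in_S B Q"
  shows "in_S (A * B) (pat_mult k P Q)"
  unfolding in_S_def
proof (intro allI impI)
  fix i l assume "i < dim_row (A * B)" "l < dim_col (A * B)" and not_PQ: "\<not> pat_mult k P Q i l"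
  then have i: "i < a" and l: "l < b" using A B by auto
  have "A $$ (i, j) * B $$ (j, l) = 0" if "j < k" for j
    using \<open>in_S A P\<close> \<open>in_S B Q\<close> not_PQ that i l A B unfolding in_S_def pat_mult_def
    by (cases "P i j") auto
  then show "(A * B) $$ (i, l) = 0"
    by (auto simp: index_mult_mat_sum[OF A B i l] intro!: sum.neutral)
qed

lemma mat_inv_correct:
  assumes A: "A \<in> carrier_mat n n" and "det A \<noteq> 0"
  shows "mat_inv A \<in> carrier_mat n n" "A * mat_inv A = 1\<^sub>m n" "mat_inv A * A = 1\<^sub>m n"
proof -
  obtain B where B: "B \<in> carrier_mat n n" "A * B = 1\<^sub>m n" "B * A = 1\<^sub>m n"
    using det_non_zero_imp_unit[OF assms, of undefined] unfolding Units_def by (auto simp: ring_mat_simps)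
  have unique: "C = B" if "C \<in> carrier_mat n n" "A * C = 1\<^sub>m n" "C * A = 1\<^sub>m n" for C
  proof -
    have "C = C * (A * B)" using that(1) B(2) by simp
    also have "\<dots> = (C * A) * B" using that(1) A B(1) by (simp add: assoc_mult_mat)
    finally show ?thesis using that(3) B(1) by simp
  qed
  have "mat_inv A = B"
    unfolding mat_inv_def carrier_matD(1)[OF A] by (rule the_equality) (use B unique in blast)+
  then show "mat_inv A \<in> carrier_mat n n" "A * mat_inv A = 1\<^sub>m n" "mat_inv A * A = 1\<^sub>m n"
    using B by auto
qed

lemma pos_def_det_nonzero:
  assumes R: "R \<in> carrier_mat n n" and "pos_def R"
  shows "det R \<noteq> 0"
proof
  assume "det R = 0"
  then obtain v where "v \<in> carrier_vec n" "v \<noteq> 0\<^sub>v n" "R *\<^sub>v v = 0\<^sub>v n"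
    using det_0_iff_vec_prod_zero[OF R] by blast
  with \<open>pos_def R\<close> R show False unfolding pos_def_def by auto
qed

lemma lower_triangular_det_nonzero:
  fixes L :: "'a :: idom mat"
  assumes L: "L \<in> carrier_mat n n"
    and "\<And>i j. i < j \<Longrightarrow> j < n \<Longrightarrow> L $$ (i, j) = 0"
    and "\<And>i. i < n \<Longrightarrow> L $$ (i, i) \<noteq> 0"
  shows "det L \<noteq> 0"
proof -
  have "0 \<notin> set (diag_mat L)"
    using assms unfolding diag_mat_def by auto
  then show ?thesis
    using det_lower_triangular[OF assms(2) L] by (simp add: prod_list_zero_iff)
qed

lemma block_diagonal_inverse:
  fixes R X :: "real mat"
  assumes R: "R \<in> carrier_mat m m" and X: "X \<in> carrier_mat m m"
    and RX: "R * X = 1\<^sub>m m" and XR: "X * R = 1\<^sub>m m"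
    and R_block: "in_S R (\<lambda>i j. g i = g j)"
  shows "in_S X (\<lambda>i j. g i = g j)"
proof -
  define X' where "X' = mat m m (\<lambda>(a, b). if g a = g b then X $$ (a, b) else 0)"
  have X': "X' \<in> carrier_mat m m" unfolding X'_def by auto
  have "R * X' = 1\<^sub>m m"
  proof (rule eq_matI)
    fix a b assume "a < dim_row (1\<^sub>m m)" "b < dim_col (1\<^sub>m m)"
    then have a: "a < m" and b: "b < m" by auto
    have "R $$ (a, e) * X' $$ (e, b) = (if g a = g b then R $$ (a, e) * X $$ (e, b) else 0)"
      if "e < m" for e
      using R_block R a b that unfolding X'_def in_S_def by (cases "g a = g e") auto
    then have "(R * X') $$ (a, b) = (if g a = g b then (R * X) $$ (a, b) else 0)"
      by (simp add: index_mult_mat_sum[OF R X' a b] index_mult_mat_sum[OF R X a b])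
    also have "\<dots> = 1\<^sub>m m $$ (a, b)"
      using RX a b by auto
    finally show "(R * X') $$ (a, b) = 1\<^sub>m m $$ (a, b)" .
  qed (use R X' in auto)
  then have "X = X'"
    by (metis R X X' XR assoc_mult_mat left_mult_one_mat right_mult_one_mat)
  have "X $$ (i, j) = 0" if "i < m" "j < m" "g i \<noteq> g j" for i j
  proof -
    have "X $$ (i, j) = X' $$ (i, j)" using \<open>X = X'\<close> by simp
    also have "\<dots> = 0" using that unfolding X'_def by simp
    finally show ?thesis .
  qed
  then show ?thesis
    using X unfolding in_S_def by auto
qed

lemma cholesky_factor_no_fill:
  fixes L :: "real mat"
  assumes L: "L \<in> carrier_mat n n"
    and upper_zero: "\<And>i j. i < j \<Longrightarrow> j < n \<Longrightarrow> L $$ (i, j) = 0"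
    and diag: "\<And>i. i < n \<Longrightarrow> L $$ (i, i) \<noteq> 0"
    and gram: "in_S (L * L\<^sup>T) Q"
    and refl: "\<And>i. i < n \<Longrightarrow> Q i i"
    and no_fill: "\<And>c d e. e < d \<Longrightarrow> d < c \<Longrightarrow> c < n \<Longrightarrow> Q c e \<Longrightarrow> Q d e \<Longrightarrow> Q c d"
  shows "in_S L (pat_lower Q)"
proof -
  have "L $$ (c, d) = 0" if "d < n" "c < n" "\<not> (d \<le> c \<and> Q c d)" for c d
    using that
  proof (induction d arbitrary: c rule: less_induct)
    case (less d)
    consider "c < d" | "d < c" "\<not> Q c d"
      using less.prems refl by (cases c d rule: linorder_cases) auto
    then show ?case
    proof cases
      case 1
      then show ?thesis using upper_zero less.prems by auto
    next
      case 2
      have "(L * L\<^sup>T) $$ (c, d) = L $$ (c, d) * L\<^sup>T $$ (d, d)"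
      proof (rule index_mult_mat_single_term)
        fix e assume e: "e < n" "e \<noteq> d"
        show "L $$ (c, e) * L\<^sup>T $$ (e, d) = 0"
        proof (cases "d < e")
          case True
          then show ?thesis using upper_zero e less.prems L by auto
        next
          case False
          then have "e < d" using e by auto
          then have "\<not> (Q c e \<and> Q d e)"
            using no_fill[of e d c] 2 less.prems by auto
          then have "L $$ (c, e) = 0 \<or> L $$ (d, e) = 0"
            using less.IH[of e c] less.IH[of e d] \<open>e < d\<close> 2 less.prems by auto
          then show ?thesis using e less.prems L by auto
        qed
      qed (use L less.prems in auto)
      moreover have "(L * L\<^sup>T) $$ (c, d) = 0"
        using gram 2 less.prems L unfolding in_S_def by auto
      ultimately show ?thesis
        using diag[of d] less.prems L by auto
    qed
  qed
  then show ?thesis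
    using L unfolding in_S_def pat_lower_def by auto
qed

lemma lower_triangular_inverse_no_fill:
  fixes L X :: "real mat"
  assumes L: "L \<in> carrier_mat n n" and X: "X \<in> carrier_mat n n" and LX: "L * X = 1\<^sub>m n"
    and L_pattern: "in_S L (pat_lower Q)"
    and diag: "\<And>i. i < n \<Longrightarrow> L $$ (i, i) \<noteq> 0"
    and refl: "\<And>i. i < n \<Longrightarrow> Q i i"
    and trans: "\<And>c d e. d < e \<Longrightarrow> e < c \<Longrightarrow> c < n \<Longrightarrow> Q c e \<Longrightarrow> Q e d \<Longrightarrow> Q c d"
  shows "in_S X (pat_lower Q)"
proof -
  have L_nonzero: "e \<le> c \<and> Q c e" if "L $$ (c, e) \<noteq> 0" "c < n" "e < n" for c e
    using L_pattern L that unfolding in_S_def pat_lower_def by auto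
  have "X $$ (c, d) = 0" if "c < n" "d < n" "\<not> (d \<le> c \<and> Q c d)" for c d
    using that
  proof (induction c arbitrary: d rule: less_induct)
    case (less c)
    have "c \<noteq> d" using less.prems refl by auto
    have "(L * X) $$ (c, d) = L $$ (c, c) * X $$ (c, d)"
    proof (rule index_mult_mat_single_term)
      fix e assume e: "e < n" "e \<noteq> c"
      show "L $$ (c, e) * X $$ (e, d) = 0"
      proof (rule ccontr)
        assume "L $$ (c, e) * X $$ (e, d) \<noteq> 0"
        then have "e < c" "Q c e" "d \<le> e" "Q e d"
          using L_nonzero[of c e] less.IH[of e d] less.prems e by auto
        then show False
          using trans[of d e c] less.prems by (cases "d = e") auto
      qed
    qed (use L X less.prems in auto)
    moreover have "(L * X) $$ (c, d) = 0"
      using LX \<open>c \<noteq> d\<close> less.prems by auto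
    ultimately show ?case
      using diag[of c] less.prems by auto
  qed
  then show ?thesis
    using X unfolding in_S_def pat_lower_def by auto
qed

lemma regions_prefix_closed: "q \<in> regions J M \<Longrightarrow> prefix p q \<Longrightarrow> p \<in> regions J M"
  unfolding regions_def using prefix_length_le set_mono_prefix by fastforce

lemma mr_partition_children:
  assumes "mr_partition n J M Ireg" "p \<in> regions J M" "length p < M"
  shows "Ireg p = (\<Union>j<J. Ireg (p @ [j]))"
    and "j < J \<Longrightarrow> j' < J \<Longrightarrow> j \<noteq> j' \<Longrightarrow> Ireg (p @ [j]) \<inter> Ireg (p @ [j']) = {}"
proof -
  have "\<forall>p \<in> regions J M. length p < M \<longrightarrow>
          Ireg p = (\<Union>j<J. Ireg (p @ [j])) \<and>
          (\<forall>j<J. \<forall>j'<J. j \<noteq> j' \<longrightarrow> Ireg (p @ [j]) \<inter> Ireg (p @ [j']) = {})"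
    using assms(1) unfolding mr_partition_def by (elim conjE)
  then show "Ireg p = (\<Union>j<J. Ireg (p @ [j]))"
    and "j < J \<Longrightarrow> j' < J \<Longrightarrow> j \<noteq> j' \<Longrightarrow> Ireg (p @ [j]) \<inter> Ireg (p @ [j']) = {}"
    using assms(2,3) by simp_all
qed

lemma Ireg_prefix_antimono:
  assumes part: "mr_partition n J M Ireg" and "q \<in> regions J M" and "prefix p q"
  shows "Ireg q \<subseteq> Ireg p"
proof -
  obtain s where "q = p @ s" using \<open>prefix p q\<close> prefixE by blast
  have "p @ s \<in> regions J M \<Longrightarrow> Ireg (p @ s) \<subseteq> Ireg p"
  proof (induction s rule: rev_induct)
    case (snoc j s)
    have ps: "p @ s \<in> regions J M"
      using snoc.prems regions_prefix_closed[of "p @ s @ [j]" J M "p @ s"] by simp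
    have "length (p @ s) < M" and "j < J"
      using snoc.prems unfolding regions_def by auto
    then have "Ireg (p @ s @ [j]) \<subseteq> Ireg (p @ s)"
      using mr_partition_children(1)[OF part ps] by auto
    then show ?case using snoc.IH ps by auto
  qed simp
  then show ?thesis using \<open>q \<in> regions J M\<close> \<open>q = p @ s\<close> by simp
qed

lemma Ireg_subset_grid:
  assumes "mr_partition n J M Ireg" "q \<in> regions J M"
  shows "Ireg q \<subseteq> {..<n}"
proof -
  have "Ireg [] = {..<n}" using assms(1) unfolding mr_partition_def by simp
  then show ?thesis using Ireg_prefix_antimono[OF assms, of "[]"] by simp
qed

lemma Ireg_meet_imp_comparable:
  assumes part: "mr_partition n J M Ireg" and p: "p \<in> regions J M" and q: "q \<in> regions J M"
    and meet: "Ireg p \<inter> Ireg q \<noteq> {}"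
  shows "prefix p q \<or> prefix q p"
proof (rule ccontr)
  assume "\<not> (prefix p q \<or> prefix q p)"
  then have "p \<parallel> q" by blast
  then obtain as b bs c cs where "b \<noteq> c" and pq: "p = as @ b # bs" "q = as @ c # cs"
    using parallel_decomp by blast
  have "as \<in> regions J M" "length as < M" "b < J" "c < J"
    using p q pq unfolding regions_def by auto
  with \<open>b \<noteq> c\<close> have "Ireg (as @ [b]) \<inter> Ireg (as @ [c]) = {}"
    using mr_partition_children(2)[OF part] by blast
  moreover have "Ireg p \<subseteq> Ireg (as @ [b])" "Ireg q \<subseteq> Ireg (as @ [c])"
    using Ireg_prefix_antimono[OF part] p q pq by auto
  ultimately show False using meet by blast
qed

lemma Ireg_meet_finest_imp_prefix:
  assumes "mr_partition n J M Ireg" "p \<in> regions J M" "q \<in> regions J M" "length q = M"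
    and "Ireg p \<inter> Ireg q \<noteq> {}"
  shows "prefix p q"
proof -
  have "length p \<le> length q" using assms(2,4) unfolding regions_def by auto
  then show ?thesis
    using Ireg_meet_imp_comparable[OF assms(1-3,5)] prefix_length_prefix by blast
qed

locale mr_layout =
  fixes n J M :: nat and Ireg K :: "nat list \<Rightarrow> nat set" and r :: "nat \<Rightarrow> nat"
    and colreg :: "nat \<Rightarrow> nat list"
  assumes part: "mr_partition n J M Ireg"
    and knots: "mr_knots n J M Ireg K r"
    and cols: "mr_columns n J M K colreg"
begin

abbreviation gram_pattern :: pattern where
  "gram_pattern \<equiv> pat_mult n (pat_trans (mrd_pattern Ireg colreg)) (mrd_pattern Ireg colreg)"

lemma colreg_in_regions: "c < n \<Longrightarrow> colreg c \<in> regions J M"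
  using cols unfolding mr_columns_def by blast

lemma colreg_length_antimono:
  assumes "d \<le> c" "c < n"
  shows "length (colreg c) \<le> length (colreg d)"
proof (cases "d = c")
  case False
  then have "col_order (colreg d) (colreg c)"
    using cols assms unfolding mr_columns_def by simp
  then show ?thesis unfolding col_order_def by auto
qed simp

lemma Ireg_colreg_nonempty:
  assumes c: "c < n"
  shows "Ireg (colreg c) \<noteq> {}"
proof -
  have "{c'. c' < n \<and> colreg c' = colreg c} \<noteq> {}" using c by blast
  then have "card {c'. c' < n \<and> colreg c' = colreg c} \<noteq> 0" by simp
  then have "K (colreg c) \<noteq> {}"
    using cols colreg_in_regions[OF c] unfolding mr_columns_def by force
  moreover have "K (colreg c) \<subseteq> Ireg (colreg c)"
    using knots colreg_in_regions[OF c] unfolding mr_knots_def by blast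
  ultimately show ?thesis by blast
qed

lemma gram_pattern_iff:
  assumes c: "c < n" and d: "d < n"
  shows "gram_pattern c d \<longleftrightarrow> prefix (colreg c) (colreg d) \<or> prefix (colreg d) (colreg c)"
proof -
  have "gram_pattern c d \<longleftrightarrow> Ireg (colreg c) \<inter> Ireg (colreg d) \<noteq> {}"
    using Ireg_subset_grid[OF part colreg_in_regions[OF c]]
    unfolding pat_mult_def pat_trans_def mrd_pattern_def by blast
  also have "\<dots> \<longleftrightarrow> prefix (colreg c) (colreg d) \<or> prefix (colreg d) (colreg c)"
  proof
    assume "prefix (colreg c) (colreg d) \<or> prefix (colreg d) (colreg c)"
    then show "Ireg (colreg c) \<inter> Ireg (colreg d) \<noteq> {}"
      using Ireg_prefix_antimono[OF part colreg_in_regions] Ireg_colreg_nonempty c d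
      by (metis inf.absorb2 inf.absorb1)
  qed (rule Ireg_meet_imp_comparable[OF part colreg_in_regions[OF c] colreg_in_regions[OF d]])
  finally show ?thesis .
qed

lemma lower_gram_pattern_iff:
  assumes "c < n" "d < n"
  shows "pat_lower gram_pattern c d \<longleftrightarrow> d \<le> c \<and> prefix (colreg c) (colreg d)"
proof -
  have "prefix (colreg c) (colreg d)" if "d \<le> c" "prefix (colreg d) (colreg c)"
    using prefix_length_prefix[OF prefix_order.refl that(2)] colreg_length_antimono that assms
    by blast
  then show ?thesis
    unfolding pat_lower_def gram_pattern_iff[OF assms] by blast
qed


lemma gram_pattern_refl: "c < n \<Longrightarrow> gram_pattern c c"
  using gram_pattern_iff by blast

lemma gram_pattern_no_fill:
  assumes "e < d" "d < c" "c < n" "gram_pattern c e" "gram_pattern d e"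
  shows "gram_pattern c d"
proof -
  have "prefix (colreg c) (colreg e)" "prefix (colreg d) (colreg e)"
    using assms lower_gram_pattern_iff[of c e] lower_gram_pattern_iff[of d e]
    unfolding pat_lower_def by auto
  then show ?thesis
    using prefix_same_cases gram_pattern_iff[of c d] assms by auto
qed

lemma gram_pattern_lower_trans:
  assumes "d < e" "e < c" "c < n" "gram_pattern c e" "gram_pattern e d"
  shows "gram_pattern c d"
proof -
  have "prefix (colreg c) (colreg e)" "prefix (colreg e) (colreg d)"
    using assms lower_gram_pattern_iff[of c e] lower_gram_pattern_iff[of e d]
    unfolding pat_lower_def by auto
  then show ?thesis
    using gram_pattern_iff assms prefix_order.trans by auto
qed

lemma mrd_gram_sandwich_in_S:
  fixes Bp H G :: "real mat"
  assumes Bp: "Bp \<in> carrier_mat n n" "in_S Bp (mrd_pattern Ireg colreg)"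
    and H: "H \<in> carrier_mat ny n" "in_S H (\<lambda>i k. k \<in> Ireg (obsreg i))"
    and G: "G \<in> carrier_mat ny ny" "in_S G (\<lambda>i j. obsreg i = obsreg j)"
    and obs_finest: "\<And>i. i < ny \<Longrightarrow> obsreg i \<in> regions J M \<and> length (obsreg i) = M"
  shows "in_S (Bp\<^sup>T * H\<^sup>T * G * H * Bp) gram_pattern"
proof -
  have carriers: "Bp\<^sup>T \<in> carrier_mat n n" "H\<^sup>T \<in> carrier_mat n ny"
    "Bp\<^sup>T * H\<^sup>T \<in> carrier_mat n ny" "Bp\<^sup>T * H\<^sup>T * G \<in> carrier_mat n ny"
    "Bp\<^sup>T * H\<^sup>T * G * H \<in> carrier_mat n n"
    using Bp H G by auto
  note product_in_S =
    in_S_mult[OF carriers(5) Bp(1)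
      in_S_mult[OF carriers(4) H(1)
        in_S_mult[OF carriers(3) G(1)
          in_S_mult[OF carriers(1,2) in_S_transpose[OF Bp(2)] in_S_transpose[OF H(2)]]
          G(2)]
        H(2)]
      Bp(2)]
  show ?thesis
  proof (rule in_S_mono[OF product_in_S], goal_cases)
    case (1 c d)
    then have c: "c < n" and d: "d < n" using Bp by auto
    from 1(3) obtain i k l where "i < ny" "k \<in> Ireg (colreg c) \<inter> Ireg (obsreg i)"
      "l \<in> Ireg (colreg d) \<inter> Ireg (obsreg i)"
      unfolding pat_mult_def pat_trans_def mrd_pattern_def by auto
    then have "prefix (colreg c) (obsreg i)" "prefix (colreg d) (obsreg i)"
      using Ireg_meet_finest_imp_prefix[OF part colreg_in_regions] obs_finest c d by blast+
    then show "gram_pattern c d"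
      using gram_pattern_iff[OF c d] prefix_same_cases by blast
  qed
qed

lemma mrd_mult_transpose_in_S:
  fixes Bp X :: "real mat"
  assumes Bp: "Bp \<in> carrier_mat m n" "in_S Bp (mrd_pattern Ireg colreg)"
    and X: "X \<in> carrier_mat n n" "in_S X (pat_lower gram_pattern)"
  shows "in_S (Bp * X\<^sup>T) (mrd_pattern Ireg colreg)"
proof (rule in_S_mono[OF in_S_mult[OF Bp(1) transpose_carrier_mat[THEN iffD2, OF X(1)] Bp(2) in_S_transpose[OF X(2)]]], goal_cases)
  case (1 i c)
  then have c: "c < n" using X by auto
  from 1(3) obtain d where d: "d < n" "i \<in> Ireg (colreg d)" "pat_lower gram_pattern c d"
    unfolding pat_mult_def pat_trans_def mrd_pattern_def by blast
  then have "prefix (colreg c) (colreg d)"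
    using lower_gram_pattern_iff[OF c d(1)] by blast
  then show "mrd_pattern Ireg colreg i c"
    using Ireg_prefix_antimono[OF part colreg_in_regions[OF d(1)]] d(2)
    unfolding mrd_pattern_def by auto
qed

end

theorem proposition3:
  fixes n ny J M :: nat
    and Ireg K :: "nat list \<Rightarrow> nat set" and r :: "nat \<Rightarrow> nat"
    and colreg obsreg :: "nat \<Rightarrow> nat list"
    and Bp H R L :: "real mat"
  assumes part: "mr_partition n J M Ireg"
    and knots: "mr_knots n J M Ireg K r"
    and cols: "mr_columns n J M K colreg"
    and Bp_dim: "Bp \<in> carrier_mat n n"
    and Bp_mrd: "in_S Bp (mrd_pattern Ireg colreg)"
    and H_dim: "H \<in> carrier_mat ny n"
    and R_dim: "R \<in> carrier_mat ny ny"
    and R_pd: "pos_def R"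
    and obs_reg: "\<forall>i<ny. obsreg i \<in> regions J M \<and> length (obsreg i) = M"
    and R_block: "\<forall>i<ny. \<forall>j<ny. obsreg i \<noteq> obsreg j \<longrightarrow> R $$ (i, j) = 0"
    and H_block: "\<forall>i<ny. \<forall>k<n. H $$ (i, k) \<noteq> 0 \<longrightarrow> k \<in> Ireg (obsreg i)"
    and contig: "\<forall>p \<in> regions J M. length p = M \<longrightarrow>
                   (\<forall>i1 i2 i3. i1 \<in> Ireg p \<and> i2 \<in> Ireg p \<and> i1 < i3 \<and> i3 < i2 \<longrightarrow> i3 \<in> Ireg p)"
    and chol: "lower_cholesky L (1\<^sub>m n + Bp\<^sup>T * H\<^sup>T * mat_inv R * H * Bp)"
  shows "in_S (1\<^sub>m n + Bp\<^sup>T * H\<^sup>T * mat_inv R * H * Bp)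
            (pat_mult n (pat_trans (mrd_pattern Ireg colreg)) (mrd_pattern Ireg colreg))
       \<and> in_S L (pat_lower (pat_mult n (pat_trans (mrd_pattern Ireg colreg)) (mrd_pattern Ireg colreg)))
       \<and> in_S (mat_inv L) (pat_lower (pat_mult n (pat_trans (mrd_pattern Ireg colreg)) (mrd_pattern Ireg colreg)))
       \<and> in_S (Bp * (mat_inv L)\<^sup>T) (mrd_pattern Ireg colreg)"
proof -
  interpret mr_layout n J M Ireg K r colreg
    using part knots cols by unfold_locales
  define Lam where "Lam = 1\<^sub>m n + Bp\<^sup>T * H\<^sup>T * mat_inv R * H * Bp"
  have R_inv: "mat_inv R \<in> carrier_mat ny ny" "R * mat_inv R = 1\<^sub>m ny" "mat_inv R * R = 1\<^sub>m ny"
    using mat_inv_correct[OF R_dim pos_def_det_nonzero[OF R_dim R_pd]] by auto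
  have R_inv_block: "in_S (mat_inv R) (\<lambda>i j. obsreg i = obsreg j)"
    by (rule block_diagonal_inverse[OF R_dim R_inv]) (use R_dim R_block in \<open>auto simp: in_S_def\<close>)
  have H_pattern: "in_S H (\<lambda>i k. k \<in> Ireg (obsreg i))"
    using H_dim H_block unfolding in_S_def by auto
  have Lam_pattern: "in_S Lam gram_pattern"
    unfolding Lam_def
    by (rule in_S_add[OF _ _ in_S_one_mat[where P = gram_pattern, OF gram_pattern_refl]
          mrd_gram_sandwich_in_S[OF Bp_dim Bp_mrd H_dim H_pattern R_inv(1) R_inv_block]])
      (use Bp_dim H_dim R_dim obs_reg in auto)
  from chol Bp_dim have L: "L \<in> carrier_mat n n" "L * L\<^sup>T = Lam"
    and L_upper: "\<And>i j. i < j \<Longrightarrow> j < n \<Longrightarrow> L $$ (i, j) = 0"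
    and L_diag: "\<And>i. i < n \<Longrightarrow> L $$ (i, i) \<noteq> 0"
    unfolding lower_cholesky_def Lam_def by auto
  have L_pattern: "in_S L (pat_lower gram_pattern)"
    using cholesky_factor_no_fill[where Q = gram_pattern, OF L(1) L_upper L_diag _
        gram_pattern_refl gram_pattern_no_fill] Lam_pattern L(2)
    by simp
  have L_inv: "mat_inv L \<in> carrier_mat n n" "L * mat_inv L = 1\<^sub>m n"
    using mat_inv_correct[OF L(1) lower_triangular_det_nonzero[OF L(1) L_upper L_diag]] by auto
  have L_inv_pattern: "in_S (mat_inv L) (pat_lower gram_pattern)"
    by (rule lower_triangular_inverse_no_fill[where Q = gram_pattern, OF L(1) L_inv L_pattern L_diag
          gram_pattern_refl gram_pattern_lower_trans])
  show ?thesis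
    using Lam_pattern L_pattern L_inv_pattern
      mrd_mult_transpose_in_S[OF Bp_dim Bp_mrd L_inv(1) L_inv_pattern]
    unfolding Lam_def by blast
qed

end
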